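(* Let $m$ range over even integers tending to infinity, with $N=N(m)$, $n=n(m)$ positive integers satisfying $N=o(m)$ and $n=o(m)$, and fix $0<\varepsilon\le1$. Then, uniformly over $\omega\in K_m$, $$\log\Pr_{(u,q^\omega,u)}(A)=-\Big(1+\tfrac12\varepsilon^2\Big)\frac{N^2}{m}\,(1+o(1))+O(1),$$ where $A$ is the event that no symbol appears more than once in $X$ and no symbol appears more than once in $Y$.
   Context: Let $u$ be the uniform distribution on $[m]=\{1,\dots,m\}$. Let $K_m$ be the collection of all subsets of $[m]$ of cardinality $m/2$. For $\omega\in K_m$ let $q^\omega$ be the distribution on $[m]$ with $q^\omega_j=(1+\varepsilon)/m$ for $j\in\omega$ and $q^\omega_j=(1-\varepsilon)/m$ for $j\notin\omega$. $\Pr_{(u,q^\omega,u)}$ denotes the probability when $X=(X_1,\dots,X_N)$ is i.i.d. uniform on $[m]$, $Y=(Y_1,\dots,Y_N)$ is i.i.d. with marginal $q^\omega$, $Z=(Z_1,\dots,Z_n)$ is i.i.d. uniform on $[m]$, and $X,Y,Z$ are independent. *)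

theory Defs
  imports "HOL-Analysis.Analysis"
begin

definition Kset :: "nat \<Rightarrow> nat set set" where
  "Kset m = {w. w \<subseteq> {1..m} \<and> card w = m div 2}"

definition unif :: "nat \<Rightarrow> nat \<Rightarrow> real" where
  "unif m j = 1 / real m"

definition qdist :: "real \<Rightarrow> nat \<Rightarrow> nat set \<Rightarrow> nat \<Rightarrow> real" where
  "qdist \<epsilon> m w j = (if j \<in> w then (1 + \<epsilon>) / real m else (1 - \<epsilon>) / real m)"

text \<open>Pr_{(u,q^omega,u)}(A): X = (X_1..X_N) iid u, Y = (Y_1..Y_N) iid q^omega,
  Z = (Z_1..Z_n) iid u, all independent (samples indexed by {..<N}, {..<n});
  A = no symbol repeated in X and no symbol repeated in Y.\<close>
definition probA :: "real \<Rightarrow> nat \<Rightarrow> nat \<Rightarrow> nat \<Rightarrow> nat set \<Rightarrow> real" where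
  "probA \<epsilon> m N n w =
     (\<Sum>x\<in>PiE {..<N} (\<lambda>_. {1..m}). \<Sum>y\<in>PiE {..<N} (\<lambda>_. {1..m}). \<Sum>z\<in>PiE {..<n} (\<lambda>_. {1..m}).
        (\<Prod>i<N. unif m (x i)) * (\<Prod>i<N. qdist \<epsilon> m w (y i)) * (\<Prod>i<n. unif m (z i))
        * of_bool (inj_on x {..<N} \<and> inj_on y {..<N}))"

end

theory Submission
  imports Defs
begin

text \<open>Under the product measure the event factorizes: the sample \<open>Z\<close> contributes \<open>1\<close>, the
  sample \<open>X\<close> contributes the birthday product \<open>\<Prod>i<N. 1 - i/m\<close>, and sorting the draws of \<open>Y\<close>
  according to how many of them fall into \<open>\<omega>\<close> turns its contribution into the binomial mixture
  \<open>\<Sum>k. C(N,k) p\<^sup>k q\<^sup>N\<^sup>-\<^sup>k B(k) B(N-k)\<close> with \<open>p = (1+\<epsilon>)/2\<close>, \<open>q = (1-\<epsilon>)/2\<close> and \<open>B\<close> the birthday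
  product on \<open>m/2\<close> symbols.  Since \<open>ln B(k) = -k\<^sup>2/m + O(k/m + k\<^sup>3/m\<^sup>2)\<close>, the mixture is governed by
  the exponent \<open>-(k\<^sup>2 + (N-k)\<^sup>2)/m\<close>.  Completing the square around the mean \<open>pN\<close> bounds it above by
  a function linear in \<open>k\<close>, which the binomial theorem sums exactly; Jensen's inequality together
  with \<open>E[k(N-k)] = N(N-1)pq\<close> bounds the mixture below.  Both sides give \<open>-(p\<^sup>2+q\<^sup>2) N\<^sup>2/m (1 + O(N/m))\<close>,
  and \<open>1/2 + p\<^sup>2 + q\<^sup>2 = 1 + \<epsilon>\<^sup>2/2\<close>.\<close>

section \<open>Weighted sums over injective sequences\<close>

definition inj_seq_sum :: "(nat \<Rightarrow> real) \<Rightarrow> nat set \<Rightarrow> nat \<Rightarrow> real" where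
  "inj_seq_sum q A N =
     (\<Sum>y\<in>PiE {..<N} (\<lambda>_. A). (\<Prod>i<N. q (y i)) * of_bool (inj_on y {..<N}))"

lemma inj_seq_sum_0 [simp]: "inj_seq_sum q A 0 = 1"
  by (simp add: inj_seq_sum_def)

lemma inj_on_fun_upd_lessThan_Suc:
  "inj_on (g(N := a)) {..<Suc N} \<longleftrightarrow> inj_on g {..<N} \<and> a \<notin> g ` {..<N}"
proof -
  have "inj_on (g(N := a)) {..<N} = inj_on g {..<N}"
    by (rule inj_on_cong) auto
  moreover have "(g(N := a)) ` {..<N} = g ` {..<N}"
    by auto
  ultimately show ?thesis
    by (simp add: lessThan_Suc inj_on_insert)
qed

lemma inj_seq_sum_Suc:
  assumes "finite A"
  shows "inj_seq_sum q A (Suc N) = (\<Sum>a\<in>A. q a * inj_seq_sum q (A - {a}) N)"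
proof -
  let ?P = "PiE {..<N} (\<lambda>_. A)"
  let ?w = "\<lambda>y. (\<Prod>i<N. q (y i)) * of_bool (inj_on y {..<N})"
  have "inj_seq_sum q A (Suc N) =
      (\<Sum>(a, g)\<in>A \<times> ?P. (\<Prod>i<Suc N. q ((g(N := a)) i)) * of_bool (inj_on (g(N := a)) {..<Suc N}))"
    unfolding inj_seq_sum_def lessThan_Suc PiE_insert_eq
    by (subst sum.reindex[OF inj_combinator]) (simp_all add: case_prod_unfold)
  also have "\<dots> = (\<Sum>a\<in>A. q a * (\<Sum>g\<in>?P. ?w g * of_bool (a \<notin> g ` {..<N})))"
    by (subst sum.cartesian_product[symmetric])
       (simp add: prod.lessThan_Suc inj_on_fun_upd_lessThan_Suc sum_distrib_left of_bool_conj mult_ac)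
  also have "\<dots> = (\<Sum>a\<in>A. q a * inj_seq_sum q (A - {a}) N)"
  proof (intro sum.cong refl arg_cong[where f = "(*) (q _)"])
    fix a
    show "(\<Sum>g\<in>?P. ?w g * of_bool (a \<notin> g ` {..<N})) = inj_seq_sum q (A - {a}) N"
      unfolding inj_seq_sum_def
    proof (rule sum.mono_neutral_cong_right)
      show "finite ?P"
        using assms by (simp add: finite_PiE)
    qed (auto simp: PiE_def Pi_def)
  qed
  finally show ?thesis .
qed

definition ffact :: "real \<Rightarrow> nat \<Rightarrow> real" where
  "ffact s k = (\<Prod>i<k. s - real i)"

lemma ffact_0 [simp]: "ffact s 0 = 1"
  by (simp add: ffact_def)

lemma ffact_Suc: "ffact s (Suc k) = s * ffact (s - 1) k"
  unfolding ffact_def prod.lessThan_Suc_shift by (simp add: algebra_simps)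

lemma real_card_Diff_singleton: "finite A \<Longrightarrow> a \<in> A \<Longrightarrow> real (card (A - {a})) = real (card A) - 1"
  using card.remove[of A a] by simp

lemma inj_seq_sum_const:
  "finite A \<Longrightarrow> inj_seq_sum (\<lambda>_. c) A N = c ^ N * ffact (real (card A)) N"
proof (induction N arbitrary: A)
  case (Suc N)
  have "inj_seq_sum (\<lambda>_. c) (A - {a}) N = c ^ N * ffact (real (card A) - 1) N" if "a \<in> A" for a
    using Suc.IH[of "A - {a}"] Suc.prems real_card_Diff_singleton[OF Suc.prems that] by simp
  then show ?case
    using Suc.prems by (simp add: inj_seq_sum_Suc ffact_Suc)
qed simp

definition binomial_conv :: "(nat \<Rightarrow> real) \<Rightarrow> (nat \<Rightarrow> real) \<Rightarrow> nat \<Rightarrow> real" where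
  "binomial_conv a b N = (\<Sum>k\<le>N. real (N choose k) * a k * b (N - k))"

lemma binomial_conv_0 [simp]: "binomial_conv a b 0 = a 0 * b 0"
  by (simp add: binomial_conv_def)

lemma binomial_conv_scale:
  "binomial_conv (\<lambda>k. c * a k) b N = c * binomial_conv a b N"
  "binomial_conv a (\<lambda>k. c * b k) N = c * binomial_conv a b N"
  by (simp_all add: binomial_conv_def sum_distrib_left mult_ac)

text \<open>Pascal's rule, in the shape of the Leibniz rule for the derivative of a product.\<close>
lemma binomial_conv_Suc:
  "binomial_conv a b (Suc N) =
     binomial_conv (\<lambda>k. a (Suc k)) b N + binomial_conv a (\<lambda>k. b (Suc k)) N"
proof -
  have shift: "(\<Sum>k\<le>Suc N. real (N choose k) * a k * b (Suc N - k)) =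
      a 0 * b (Suc N) + (\<Sum>k\<le>N. real (N choose Suc k) * a (Suc k) * b (N - k))"
    by (subst sum.atMost_Suc_shift) simp
  have "(\<Sum>k\<le>Suc N. real (N choose k) * a k * b (Suc N - k)) =
      (\<Sum>k\<le>N. real (N choose k) * a k * b (Suc (N - k)))"
    by (simp add: sum.atMost_Suc Suc_diff_le)
  then have "binomial_conv a (\<lambda>k. b (Suc k)) N =
      a 0 * b (Suc N) + (\<Sum>k\<le>N. real (N choose Suc k) * a (Suc k) * b (N - k))"
    using shift by (simp add: binomial_conv_def)
  moreover have "binomial_conv a b (Suc N) =
      a 0 * b (Suc N) + (\<Sum>k\<le>N. real (Suc N choose Suc k) * a (Suc k) * b (N - k))"
    unfolding binomial_conv_def by (subst sum.atMost_Suc_shift) simp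
  ultimately show ?thesis
    by (simp add: binomial_conv_def sum.distrib algebra_simps)
qed

lemma inj_seq_sum_two_valued:
  assumes "finite A"
  shows "inj_seq_sum (\<lambda>j. if j \<in> w then \<alpha> else \<beta>) A N =
    binomial_conv (\<lambda>k. \<alpha> ^ k * ffact (real (card (A \<inter> w))) k)
                  (\<lambda>k. \<beta> ^ k * ffact (real (card (A - w))) k) N"
  using assms
proof (induction N arbitrary: A)
  case (Suc N)
  let ?q = "\<lambda>j. if j \<in> w then \<alpha> else \<beta>"
  let ?s = "real (card (A \<inter> w))" and ?t = "real (card (A - w))"
  let ?a = "\<lambda>s k. \<alpha> ^ k * ffact s k" and ?b = "\<lambda>t k. \<beta> ^ k * ffact t k"
  have fin: "finite (A \<inter> w)" "finite (A - w)"
    using Suc.prems by auto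
  have in_w: "?q a * inj_seq_sum ?q (A - {a}) N = \<alpha> * binomial_conv (?a (?s - 1)) (?b ?t) N"
    if "a \<in> A \<inter> w" for a
  proof -
    have "(A - {a}) \<inter> w = (A \<inter> w) - {a}" "(A - {a}) - w = A - w"
      using that by auto
    then show ?thesis
      using that fin Suc real_card_Diff_singleton[of "A \<inter> w" a] by simp
  qed
  have out_w: "?q a * inj_seq_sum ?q (A - {a}) N = \<beta> * binomial_conv (?a ?s) (?b (?t - 1)) N"
    if "a \<in> A - w" for a
  proof -
    have "(A - {a}) \<inter> w = A \<inter> w" "(A - {a}) - w = (A - w) - {a}"
      using that by auto
    then show ?thesis
      using that fin Suc real_card_Diff_singleton[of "A - w" a] by simp
  qed
  have shift_a: "(\<lambda>k. ?a ?s (Suc k)) = (\<lambda>k. ?s * \<alpha> * ?a (?s - 1) k)"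
    and shift_b: "(\<lambda>k. ?b ?t (Suc k)) = (\<lambda>k. ?t * \<beta> * ?b (?t - 1) k)"
    by (simp_all add: fun_eq_iff ffact_Suc mult_ac)
  have "inj_seq_sum ?q A (Suc N) =
      (\<Sum>a\<in>A \<inter> w. ?q a * inj_seq_sum ?q (A - {a}) N) + (\<Sum>a\<in>A - w. ?q a * inj_seq_sum ?q (A - {a}) N)"
    using Suc.prems by (simp only: inj_seq_sum_Suc sum.Int_Diff)
  also have "\<dots> = (\<Sum>a\<in>A \<inter> w. \<alpha> * binomial_conv (?a (?s - 1)) (?b ?t) N)
                  + (\<Sum>a\<in>A - w. \<beta> * binomial_conv (?a ?s) (?b (?t - 1)) N)"
    by (intro arg_cong2[where f = "(+)"] sum.cong refl in_w out_w)
  also have "\<dots> = ?s * \<alpha> * binomial_conv (?a (?s - 1)) (?b ?t) N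
                  + ?t * \<beta> * binomial_conv (?a ?s) (?b (?t - 1)) N"
    by (simp add: mult.assoc)
  also have "\<dots> = binomial_conv (?a ?s) (?b ?t) (Suc N)"
    by (simp only: binomial_conv_Suc shift_a shift_b binomial_conv_scale)
  finally show ?case .
qed simp

section \<open>Birthday products\<close>

definition birthday_prod :: "real \<Rightarrow> nat \<Rightarrow> real" where
  "birthday_prod h k = (\<Prod>i<k. 1 - real i / h)"

lemma ffact_eq_birthday_prod: "h > 0 \<Longrightarrow> c ^ k * ffact h k = (c * h) ^ k * birthday_prod h k"
proof -
  assume h: "h > 0"
  have "ffact h k = (\<Prod>i<k. h * (1 - real i / h))"
    unfolding ffact_def using h by (intro prod.cong) (auto simp: field_simps)
  then show ?thesis
    by (simp add: prod.distrib birthday_prod_def power_mult_distrib)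
qed

lemma birthday_prod_nonneg: "h > 0 \<Longrightarrow> real k \<le> h \<Longrightarrow> 0 \<le> birthday_prod h k"
  unfolding birthday_prod_def by (intro prod_nonneg) (auto simp: field_simps)

lemma birthday_prod_pos: "h > 0 \<Longrightarrow> real k < h \<Longrightarrow> 0 < birthday_prod h k"
  unfolding birthday_prod_def by (intro prod_pos) (auto simp: field_simps)

lemma sum_lessThan_of_nat_real: "(\<Sum>i<k. real i) = real k * (real k - 1) / 2"
  by (induction k) (auto simp: field_simps)

lemma birthday_prod_le_exp:
  assumes h: "h > 0" and k: "real k \<le> h"
  shows "birthday_prod h k \<le> exp (- (real k ^ 2 - real k) / (2 * h))"
proof -
  have "birthday_prod h k \<le> (\<Prod>i<k. exp (- (real i / h)))"
    unfolding birthday_prod_def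
  proof (rule prod_mono)
    fix i assume "i \<in> {..<k}"
    then have "real i \<le> h"
      using k by simp
    then show "0 \<le> 1 - real i / h \<and> 1 - real i / h \<le> exp (- (real i / h))"
      using h exp_ge_add_one_self[of "- (real i / h)"] by simp
  qed
  also have "\<dots> = exp (- (\<Sum>i<k. real i) / h)"
    by (simp add: exp_sum[symmetric] sum_negf sum_divide_distrib)
  also have "\<dots> = exp (- (real k ^ 2 - real k) / (2 * h))"
    by (simp add: sum_lessThan_of_nat_real power2_eq_square divide_simps) (simp add: algebra_simps)
  finally show ?thesis .
qed

lemma exp_le_birthday_prod:
  assumes h: "h > 0" and kK: "k \<le> K" and K: "2 * real K \<le> h"
  shows "exp (- (1 + 4 * real K / h) * real k ^ 2 / (2 * h)) \<le> birthday_prod h k"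
proof -
  have factor: "exp (- (real i / h) - 2 * (real i / h)\<^sup>2) \<le> 1 - real i / h" if "i < k" for i
  proof -
    have small: "0 \<le> real i / h" "real i / h \<le> 1 / 2"
      using that kK K h by (auto simp: field_simps)
    then have "0 < 1 - real i / h"
      by linarith
    then show ?thesis
      using ln_one_minus_pos_lower_bound[OF small] ln_ge_iff by blast
  qed
  have sq: "(\<Sum>i<k. (real i)\<^sup>2) \<le> real K * (real k)\<^sup>2"
  proof -
    have "(\<Sum>i<k. (real i)\<^sup>2) \<le> real (card {..<k}) * (real K * real k)"
      by (rule sum_bounded_above) (use kK in \<open>auto simp: power2_eq_square intro!: mult_mono\<close>)
    then show ?thesis
      by (simp add: power2_eq_square mult_ac)
  qed
  have lin: "(\<Sum>i<k. real i) / h \<le> real k ^ 2 / (2 * h)"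
    using h by (simp add: sum_lessThan_of_nat_real power2_eq_square field_simps)
  have quad: "2 * (\<Sum>i<k. (real i)\<^sup>2) / h\<^sup>2 \<le> 2 * (real K * (real k)\<^sup>2) / h\<^sup>2"
    using sq by (simp add: divide_right_mono)
  have "- (1 + 4 * real K / h) * real k ^ 2 / (2 * h) = - (real k ^ 2 / (2 * h)) - 2 * (real K * (real k)\<^sup>2) / h\<^sup>2"
    using h by (simp add: field_simps power2_eq_square)
  also have "\<dots> \<le> - (\<Sum>i<k. real i) / h - 2 * (\<Sum>i<k. (real i)\<^sup>2) / h\<^sup>2"
    using lin quad by simp
  also have "\<dots> = (\<Sum>i<k. - (real i / h) - 2 * (real i / h)\<^sup>2)"
    by (simp add: sum_subtractf sum_negf sum_divide_distrib sum_distrib_left power_divide)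
  finally have "exp (- (1 + 4 * real K / h) * real k ^ 2 / (2 * h))
      \<le> (\<Prod>i<k. exp (- (real i / h) - 2 * (real i / h)\<^sup>2))"
    by (simp add: exp_sum[symmetric])
  also have "\<dots> \<le> birthday_prod h k"
    unfolding birthday_prod_def by (intro prod_mono) (auto simp: factor less_imp_le[OF exp_gt_zero])
  finally show ?thesis .
qed

section \<open>Binomial mixtures of birthday products\<close>

text \<open>The probability that \<open>N\<close> draws have no repetition when each draw independently picks one of
  two disjoint halves of \<open>h\<close> symbols with probabilities \<open>p\<close> and \<open>q\<close>, and then a uniform symbol in it.\<close>
definition mixed_birthday_prod :: "real \<Rightarrow> real \<Rightarrow> real \<Rightarrow> nat \<Rightarrow> real" where
  "mixed_birthday_prod p q h N =
     binomial_conv (\<lambda>k. p ^ k * birthday_prod h k) (\<lambda>k. q ^ k * birthday_prod h k) N"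

lemma exp_le_quadratic_of_nonpos:
  fixes l :: real
  assumes "l \<le> 0"
  shows "exp l \<le> 1 + l + l\<^sup>2"
proof -
  define u where "u = - l"
  have u: "u \<ge> 0"
    using assms by (simp add: u_def)
  have "exp (- u) * (1 + u) \<le> 1"
    using exp_ge_add_one_self[of u] by (simp add: exp_minus field_simps)
  moreover have "1 \<le> (1 - u + u\<^sup>2) * (1 + u)"
    using u by (simp add: algebra_simps power2_eq_square power3_eq_cube)
  ultimately have "exp (- u) * (1 + u) \<le> (1 - u + u\<^sup>2) * (1 + u)"
    by linarith
  then have "exp (- u) \<le> 1 - u + u\<^sup>2"
    using u by (simp add: mult_le_cancel_right pos_add_strict)
  then show ?thesis
    by (simp add: u_def)
qed

lemma binomial_ring_mult_k_mult_diff: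
  fixes p q :: real
  shows "(\<Sum>k\<le>N. real (N choose k) * p ^ k * q ^ (N - k) * (real k * real (N - k)))
     = real N * (real N - 1) * p * q * (p + q) ^ (N - 2)"
proof (cases "N < 2")
  case True
  then have "N = 0 \<or> N = 1"
    by auto
  then show ?thesis
    by (auto simp: atMost_Suc)
next
  case False
  then obtain M where NM: "N = Suc (Suc M)"
    by (metis add_2_eq_Suc le_Suc_ex not_less)
  have summand: "real (N choose Suc k) * p ^ Suc k * q ^ (N - Suc k) * (real (Suc k) * real (N - Suc k))
      = real N * (real N - 1) * p * q * (real (M choose k) * p ^ k * q ^ (M - k))" if "k \<le> M" for k
  proof -
    have "(Suc (Suc M) choose Suc k) * Suc k = Suc (Suc M) * (Suc M choose k)"
      using Suc_times_binomial[of k "Suc M"] by (simp add: mult.commute)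
    moreover have "(Suc M - k) * (Suc M choose k) = Suc M * (M choose k)"
      using binomial_absorb_comp[of "Suc M" k] by simp
    ultimately have "(Suc (Suc M) choose Suc k) * Suc k * (Suc M - k) = Suc (Suc M) * Suc M * (M choose k)"
      by (metis mult.assoc mult.commute)
    then have "real (Suc (Suc M) choose Suc k) * real (Suc k) * real (Suc M - k)
        = real (Suc (Suc M)) * real (Suc M) * real (M choose k)"
      by (simp only: of_nat_mult[symmetric])
    then have "real (N choose Suc k) * real (Suc k) * real (N - Suc k) = real N * (real N - 1) * real (M choose k)"
      unfolding NM by simp
    moreover have "q ^ (N - Suc k) = q * q ^ (M - k)"
      using that by (simp add: NM Suc_diff_le)
    ultimately show ?thesis
      by (simp add: mult_ac)
  qed
  have "(\<Sum>k\<le>N. real (N choose k) * p ^ k * q ^ (N - k) * (real k * real (N - k)))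
      = (\<Sum>k\<le>M. real (N choose Suc k) * p ^ Suc k * q ^ (N - Suc k) * (real (Suc k) * real (N - Suc k)))"
    unfolding NM by (subst sum.atMost_Suc_shift) (simp add: sum.atMost_Suc)
  also have "\<dots> = (\<Sum>k\<le>M. real N * (real N - 1) * p * q * (real (M choose k) * p ^ k * q ^ (M - k)))"
    by (intro sum.cong refl summand) simp
  also have "\<dots> = real N * (real N - 1) * p * q * (\<Sum>k\<le>M. real (M choose k) * p ^ k * q ^ (M - k))"
    by (simp only: sum_distrib_left)
  finally show ?thesis
    by (simp add: binomial_ring[of p q M] NM)
qed

text \<open>Completing the square around the mean \<open>pN\<close> makes the exponent linear in \<open>k\<close>.\<close>
lemma birthday_prod_pair_le_exp:
  assumes h: "h > 0" and N: "2 * real N \<le> h" and k: "k \<le> N" and pq: "p + q = 1"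
  shows "birthday_prod h k * birthday_prod h (N - k)
    \<le> exp ((real N + (p\<^sup>2 + q\<^sup>2) * real N ^ 2 - 2 * q * real N ^ 2 - 2 * real N * (p - q) * real k) / (2 * h))"
proof -
  have kN: "real k \<le> h" "real (N - k) \<le> h"
    using k N h by auto
  have rk: "real (N - k) = real N - real k"
    using k by simp
  have "birthday_prod h k * birthday_prod h (N - k)
      \<le> exp (- (real k ^ 2 - real k) / (2 * h)) * exp (- (real (N - k) ^ 2 - real (N - k)) / (2 * h))"
    using h kN by (intro mult_mono birthday_prod_le_exp birthday_prod_nonneg) auto
  also have "\<dots> = exp ((real N - real k ^ 2 - real (N - k) ^ 2) / (2 * h))"
    unfolding mult_exp_exp rk using h by (simp add: field_simps)
  also have "\<dots> \<le> exp ((real N + (p\<^sup>2 + q\<^sup>2) * real N ^ 2 - 2 * q * real N ^ 2 - 2 * real N * (p - q) * real k) / (2 * h))"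
  proof -
    have "0 \<le> (real k - p * real N)\<^sup>2 + (real (N - k) - q * real N)\<^sup>2"
      by simp
    then have "real N - real k ^ 2 - real (N - k) ^ 2
        \<le> real N + (p\<^sup>2 + q\<^sup>2) * real N ^ 2 - 2 * q * real N ^ 2 - 2 * real N * (p - q) * real k"
      using pq unfolding rk by (simp add: power2_eq_square algebra_simps)
    then show ?thesis
      using h by (simp add: divide_right_mono)
  qed
  finally show ?thesis .
qed

lemma mixed_birthday_prod_le_exp:
  assumes h: "h > 0" and p: "p \<ge> 0" and q: "q \<ge> 0" and pq: "p + q = 1" and qp: "q \<le> p"
    and N: "2 * real N \<le> h"
  shows "mixed_birthday_prod p q h N
    \<le> exp (real N / (2 * h) - (p\<^sup>2 + q\<^sup>2) * real N ^ 2 / (2 * h) + p * (p - q)\<^sup>2 * real N ^ 3 / h\<^sup>2)"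
proof -
  define l where "l = - real N * (p - q) / h"
  define c where "c = (real N + (p\<^sup>2 + q\<^sup>2) * real N ^ 2 - 2 * q * real N ^ 2) / (2 * h)"
  have l0: "l \<le> 0"
    using h qp by (simp add: l_def divide_nonpos_pos)
  have "mixed_birthday_prod p q h N \<le> (\<Sum>k\<le>N. real (N choose k) * p ^ k * q ^ (N - k) * exp (c + l * real k))"
    unfolding mixed_birthday_prod_def binomial_conv_def
  proof (intro sum_mono)
    fix k assume "k \<in> {..N}"
    moreover have "c + l * real k = (real N + (p\<^sup>2 + q\<^sup>2) * real N ^ 2 - 2 * q * real N ^ 2
        - 2 * real N * (p - q) * real k) / (2 * h)"
      using h by (simp add: c_def l_def field_simps)
    ultimately have "birthday_prod h k * birthday_prod h (N - k) \<le> exp (c + l * real k)"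
      using birthday_prod_pair_le_exp[OF h N _ pq, of k] by simp
    then have "real (N choose k) * p ^ k * q ^ (N - k) * (birthday_prod h k * birthday_prod h (N - k))
        \<le> real (N choose k) * p ^ k * q ^ (N - k) * exp (c + l * real k)"
      using p q by (intro mult_left_mono) auto
    then show "real (N choose k) * (p ^ k * birthday_prod h k) * (q ^ (N - k) * birthday_prod h (N - k))
        \<le> real (N choose k) * p ^ k * q ^ (N - k) * exp (c + l * real k)"
      by (simp add: mult_ac)
  qed
  also have "\<dots> = exp c * (p * exp l + q) ^ N"
    by (simp add: binomial_ring sum_distrib_left exp_add exp_of_nat2_mult power_mult_distrib mult_ac)
  also have "\<dots> \<le> exp c * exp (p * (l + l\<^sup>2)) ^ N"
  proof -
    have "p * exp l + q = 1 + p * (exp l - 1)"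
      using pq by (simp add: algebra_simps)
    also have "\<dots> \<le> 1 + p * (l + l\<^sup>2)"
      using exp_le_quadratic_of_nonpos[OF l0] p by (intro add_left_mono mult_left_mono) auto
    also have "\<dots> \<le> exp (p * (l + l\<^sup>2))"
      by simp
    finally show ?thesis
      using p q by (intro mult_left_mono power_mono) auto
  qed
  also have "\<dots> = exp (c + real N * (p * (l + l\<^sup>2)))"
    by (simp add: exp_add exp_of_nat_mult)
  also have "c + real N * (p * (l + l\<^sup>2))
      = real N / (2 * h) - (p\<^sup>2 + q\<^sup>2) * real N ^ 2 / (2 * h) + p * (p - q)\<^sup>2 * real N ^ 3 / h\<^sup>2"
  proof -
    have q: "q = 1 - p"
      using pq by simp
    show ?thesis
      using h unfolding c_def l_def q by (simp add: field_simps power2_eq_square power3_eq_cube)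
  qed
  finally show ?thesis .
qed

text \<open>Jensen's inequality for the binomial weights, using \<open>E[k(N-k)] = N(N-1)pq\<close>.\<close>
lemma mixed_birthday_prod_ge_exp:
  assumes h: "h > 0" and p: "p \<ge> 0" and q: "q \<ge> 0" and pq: "p + q = 1"
    and N: "2 * real N \<le> h"
  shows "exp (- (1 + 4 * real N / h) * ((p\<^sup>2 + q\<^sup>2) * real N ^ 2 + real N / 2) / (2 * h))
    \<le> mixed_birthday_prod p q h N"
proof -
  define c where "c = 1 + 4 * real N / h"
  define w where "w k = real (N choose k) * p ^ k * q ^ (N - k)" for k
  define y where "y k = - c * (real k ^ 2 + real (N - k) ^ 2) / (2 * h)" for k
  have c: "c > 0"
    using h by (simp add: c_def add_pos_nonneg)
  have w0: "w k \<ge> 0" for k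
    using p q by (simp add: w_def)
  have w1: "(\<Sum>k\<le>N. w k) = 1"
    using binomial_ring[of p q N] pq by (simp add: w_def)
  have "exp (\<Sum>k\<le>N. w k * y k) \<le> (\<Sum>k\<le>N. w k * exp (y k))"
    using convex_on_sum[OF _ _ exp_convex w1, of y] w0 by simp
  also have "\<dots> \<le> mixed_birthday_prod p q h N"
    unfolding mixed_birthday_prod_def binomial_conv_def
  proof (rule sum_mono)
    fix k assume "k \<in> {..N}"
    then have "k \<le> N" "N - k \<le> N"
      by auto
    note bounds = exp_le_birthday_prod[OF h this(1) N] exp_le_birthday_prod[OF h this(2) N]
    have "exp (- c * real k ^ 2 / (2 * h)) * exp (- c * real (N - k) ^ 2 / (2 * h))
        \<le> birthday_prod h k * birthday_prod h (N - k)"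
      using bounds unfolding c_def
      by (intro mult_mono) (auto intro: order.trans[OF less_imp_le[OF exp_gt_zero]])
    moreover have "exp (y k) = exp (- c * real k ^ 2 / (2 * h)) * exp (- c * real (N - k) ^ 2 / (2 * h))"
      unfolding y_def mult_exp_exp by (simp add: add_divide_distrib[symmetric] algebra_simps)
    ultimately have "w k * exp (y k) \<le> w k * (birthday_prod h k * birthday_prod h (N - k))"
      using w0 by (simp add: mult_left_mono)
    then show "w k * exp (y k) \<le> real (N choose k) * (p ^ k * birthday_prod h k) * (q ^ (N - k) * birthday_prod h (N - k))"
      by (simp add: w_def mult_ac)
  qed
  finally have jensen: "exp (\<Sum>k\<le>N. w k * y k) \<le> mixed_birthday_prod p q h N" .
  have "(\<Sum>k\<le>N. w k * y k) = - c / (2 * h) * (real N ^ 2 * (\<Sum>k\<le>N. w k) - 2 * (\<Sum>k\<le>N. w k * (real k * real (N - k))))"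
  proof -
    have "w k * y k = - c / (2 * h) * (real N ^ 2 * w k - 2 * (w k * (real k * real (N - k))))" if "k \<le> N" for k
      using that h by (simp add: y_def of_nat_diff field_simps power2_eq_square)
    then have "(\<Sum>k\<le>N. w k * y k)
        = (\<Sum>k\<le>N. - c / (2 * h) * (real N ^ 2 * w k - 2 * (w k * (real k * real (N - k)))))"
      by (intro sum.cong) auto
    then show ?thesis
      by (simp only: sum_distrib_left[symmetric] sum_subtractf)
  qed
  also have "\<dots> = - c / (2 * h) * ((p\<^sup>2 + q\<^sup>2) * real N ^ 2 + 2 * real N * (p * q))"
  proof -
    have S: "(\<Sum>k\<le>N. w k * (real k * real (N - k))) = real N * (real N - 1) * p * q"
      using binomial_ring_mult_k_mult_diff[of N p q] pq by (simp add: w_def)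
    have q: "q = 1 - p"
      using pq by simp
    show ?thesis
      unfolding w1 S q by (simp add: algebra_simps power2_eq_square)
  qed
  also have "\<dots> \<ge> - c * ((p\<^sup>2 + q\<^sup>2) * real N ^ 2 + real N / 2) / (2 * h)"
  proof -
    have "4 * (p * q) = (p + q)\<^sup>2 - (p - q)\<^sup>2"
      by (simp add: power2_eq_square algebra_simps)
    then have "4 * (p * q) \<le> 1"
      using pq by simp
    then have "real N * (4 * (p * q)) \<le> real N"
      by (simp add: mult_left_le)
    then have "4 * (p * (q * real N)) \<le> real N"
      by (simp add: mult_ac)
    then show ?thesis
      using c h by (simp add: divide_simps mult_le_cancel_left_pos)
  qed
  finally show ?thesis
    using jensen unfolding c_def by (meson exp_le_cancel_iff order.trans)
qed

section \<open>The probability of no repetition\<close>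

lemma probA_eq_birthday_prods:
  assumes m: "m > 0" and ev: "even m" and w: "w \<in> Kset m"
  shows "probA \<epsilon> m N n w = birthday_prod (real m) N * mixed_birthday_prod ((1 + \<epsilon>) / 2) ((1 - \<epsilon>) / 2) (real m / 2) N"
proof -
  let ?A = "{1..m}"
  let ?X = "PiE {..<N} (\<lambda>_. ?A)" and ?Z = "PiE {..<n} (\<lambda>_. ?A)"
  define fx where "fx x = (\<Prod>i<N. unif m (x i)) * of_bool (inj_on x {..<N})" for x :: "nat \<Rightarrow> nat"
  define fy where "fy y = (\<Prod>i<N. qdist \<epsilon> m w (y i)) * of_bool (inj_on y {..<N})" for y :: "nat \<Rightarrow> nat"
  define fz where "fz z = (\<Prod>i<n. unif m (z i))" for z :: "nat \<Rightarrow> nat"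
  have "probA \<epsilon> m N n w = (\<Sum>x\<in>?X. \<Sum>y\<in>?X. \<Sum>z\<in>?Z. fx x * (fy y * fz z))"
    unfolding probA_def fx_def fy_def fz_def by (intro sum.cong refl) (simp add: of_bool_conj mult_ac)
  also have "\<dots> = (\<Sum>x\<in>?X. fx x * (sum fy ?X * sum fz ?Z))"
    unfolding sum_product by (simp only: sum_distrib_left)
  also have "\<dots> = sum fx ?X * sum fy ?X * sum fz ?Z"
    by (simp add: sum_distrib_right mult.assoc)
  finally have "probA \<epsilon> m N n w = inj_seq_sum (unif m) ?A N * inj_seq_sum (qdist \<epsilon> m w) ?A N * (\<Sum>z\<in>?Z. \<Prod>i<n. unif m (z i))"
    by (simp add: fx_def fy_def fz_def inj_seq_sum_def)
  also have "(\<Sum>z\<in>?Z. \<Prod>i<n. unif m (z i)) = 1"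
    using m by (simp add: unif_def card_PiE power_divide)
  also have "inj_seq_sum (unif m) ?A N = birthday_prod (real m) N"
    using m by (simp add: unif_def[abs_def] inj_seq_sum_const ffact_eq_birthday_prod)
  also have "inj_seq_sum (qdist \<epsilon> m w) ?A N = mixed_birthday_prod ((1 + \<epsilon>) / 2) ((1 - \<epsilon>) / 2) (real m / 2) N"
  proof -
    have wA: "w \<subseteq> ?A" and cw: "card w = m div 2"
      using w by (auto simp: Kset_def)
    have card: "real (card (?A \<inter> w)) = real m / 2" "real (card (?A - w)) = real m / 2"
      using wA cw ev by (auto simp: Int_absorb1 card_Diff_subset finite_subset of_nat_diff real_of_nat_div elim!: evenE)
    have q: "qdist \<epsilon> m w = (\<lambda>j. if j \<in> w then (1 + \<epsilon>) / real m else (1 - \<epsilon>) / real m)"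
      by (auto simp: qdist_def)
    have scale: "(1 + \<epsilon>) / real m * (real m / 2) = (1 + \<epsilon>) / 2" "(1 - \<epsilon>) / real m * (real m / 2) = (1 - \<epsilon>) / 2"
      using m by auto
    have h: "real m / 2 > 0"
      using m by simp
    show ?thesis
      unfolding q inj_seq_sum_two_valued[OF finite_atLeastAtMost] card
        ffact_eq_birthday_prod[OF h] scale mixed_birthday_prod_def ..
  qed
  finally show ?thesis
    by simp
qed

section \<open>The logarithmic estimate\<close>

lemma ln_birthday_prod_bounds:
  fixes m :: real
  assumes m: "m > 0" and N: "2 * real N \<le> m"
  shows "- (1 + 4 * (real N / m)) * (real N ^ 2 / m) / 2 \<le> ln (birthday_prod m N)"
    and "ln (birthday_prod m N) \<le> - (real N ^ 2 / m - real N / m) / 2"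
proof -
  have lower: "exp (- (1 + 4 * real N / m) * real N ^ 2 / (2 * m)) \<le> birthday_prod m N"
    using exp_le_birthday_prod[OF m order.refl] N by simp
  then have pos: "birthday_prod m N > 0"
    using exp_gt_zero less_le_trans by blast
  from lower show "- (1 + 4 * (real N / m)) * (real N ^ 2 / m) / 2 \<le> ln (birthday_prod m N)"
    by (simp add: ln_ge_iff[OF pos] field_simps)
  have "ln (birthday_prod m N) \<le> ln (exp (- (real N ^ 2 - real N) / (2 * m)))"
    using birthday_prod_le_exp[OF m] N pos by (intro ln_mono) auto
  then show "ln (birthday_prod m N) \<le> - (real N ^ 2 / m - real N / m) / 2"
    using m by (simp add: field_simps)
qed

lemma ln_mixed_birthday_prod_bounds:
  fixes m :: real
  assumes m: "m > 0" and N: "4 * real N \<le> m"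
    and p: "p \<ge> 0" and q: "q \<ge> 0" and pq: "p + q = 1" and qp: "q \<le> p"
  shows "- (1 + 8 * (real N / m)) * ((p\<^sup>2 + q\<^sup>2) * (real N ^ 2 / m) + real N / m / 2)
      \<le> ln (mixed_birthday_prod p q (m / 2) N)"
    and "ln (mixed_birthday_prod p q (m / 2) N)
      \<le> real N / m - (p\<^sup>2 + q\<^sup>2) * (real N ^ 2 / m) + 4 * p * (p - q)\<^sup>2 * (real N / m) * (real N ^ 2 / m)"
proof -
  have h: "m / 2 > 0" and hN: "2 * real N \<le> m / 2"
    using m N by auto
  have lower: "exp (- (1 + 4 * real N / (m / 2)) * ((p\<^sup>2 + q\<^sup>2) * real N ^ 2 + real N / 2) / (2 * (m / 2)))
      \<le> mixed_birthday_prod p q (m / 2) N"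
    by (rule mixed_birthday_prod_ge_exp[OF h p q pq hN])
  then have pos: "mixed_birthday_prod p q (m / 2) N > 0"
    using exp_gt_zero less_le_trans by blast
  from lower show "- (1 + 8 * (real N / m)) * ((p\<^sup>2 + q\<^sup>2) * (real N ^ 2 / m) + real N / m / 2)
      \<le> ln (mixed_birthday_prod p q (m / 2) N)"
    using m by (simp add: ln_ge_iff[OF pos] field_simps)
  have "ln (mixed_birthday_prod p q (m / 2) N) \<le> ln (exp (real N / (2 * (m / 2))
      - (p\<^sup>2 + q\<^sup>2) * real N ^ 2 / (2 * (m / 2)) + p * (p - q)\<^sup>2 * real N ^ 3 / (m / 2)\<^sup>2))"
    using mixed_birthday_prod_le_exp[OF h p q pq qp hN] pos by (intro ln_mono) auto
  then show "ln (mixed_birthday_prod p q (m / 2) N)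
      \<le> real N / m - (p\<^sup>2 + q\<^sup>2) * (real N ^ 2 / m) + 4 * p * (p - q)\<^sup>2 * (real N / m) * (real N ^ 2 / m)"
    using m by (simp add: field_simps power2_eq_square power3_eq_cube)
qed

lemma abs_log_estimate_le:
  fixes x A s \<kappa> LX LY :: real
  assumes x: "0 \<le> x" "x \<le> 1 / 4" and A: "0 \<le> A" and s: "1 / 2 \<le> s" "s \<le> 1"
    and \<kappa>: "0 \<le> \<kappa>" "\<kappa> \<le> 4"
    and X: "- (1 + 4 * x) * A / 2 \<le> LX" "LX \<le> - (A - x) / 2"
    and Y: "- (1 + 8 * x) * (s * A + x / 2) \<le> LY" "LY \<le> x - s * A + \<kappa> * x * A"
  shows "\<bar>LX + LY + (1 / 2 + s) * A\<bar> \<le> 10 * x * ((1 / 2 + s) * A) + 1"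
proof -
  have "\<kappa> * (x * A) \<le> 4 * (x * A)" "0 \<le> s * (x * A)"
    using x A s \<kappa> by (auto intro!: mult_right_mono mult_nonneg_nonneg)
  moreover have "x * x \<le> x * (1 / 4)"
    using x by (intro mult_left_mono) auto
  ultimately show ?thesis
    using X Y x by (simp add: abs_le_iff algebra_simps)
qed

lemma ln_probA_estimate:
  assumes ev: "even m" and w: "w \<in> Kset m" and N: "0 < N" "4 * real N \<le> real m"
    and eps: "0 < \<epsilon>" "\<epsilon> \<le> 1"
  shows "\<bar>ln (probA \<epsilon> m N n w) + (1 + \<epsilon>\<^sup>2 / 2) * (real N)\<^sup>2 / real m\<bar>
    \<le> 10 * (real N / real m) * ((1 + \<epsilon>\<^sup>2 / 2) * (real N)\<^sup>2 / real m) + 1"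
proof -
  define p where "p = (1 + \<epsilon>) / 2"
  define q where "q = (1 - \<epsilon>) / 2"
  have m: "real m > 0"
    using N by linarith
  have pq: "p \<ge> 0" "q \<ge> 0" "p + q = 1" "q \<le> p"
    using eps by (auto simp: p_def q_def add_divide_distrib[symmetric])
  have s: "p\<^sup>2 + q\<^sup>2 = (1 + \<epsilon>\<^sup>2) / 2"
    by (simp add: p_def q_def power2_eq_square field_simps)
  have eps2: "\<epsilon>\<^sup>2 \<le> 1"
    using eps by (simp add: power_le_one)
  then have s_bounds: "1 / 2 \<le> p\<^sup>2 + q\<^sup>2" "p\<^sup>2 + q\<^sup>2 \<le> 1"
    unfolding s by auto
  have "p - q = \<epsilon>"
    by (simp add: p_def q_def field_simps)
  then have "p \<le> 1" "(p - q)\<^sup>2 \<le> 1"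
    using eps eps2 by (auto simp: p_def)
  then have \<kappa>: "0 \<le> 4 * p * (p - q)\<^sup>2" "4 * p * (p - q)\<^sup>2 \<le> 4"
    using pq mult_le_one[of p "(p - q)\<^sup>2"] by auto
  have "2 * real N \<le> real m"
    using N by linarith
  note X = ln_birthday_prod_bounds[OF m this]
  note Y = ln_mixed_birthday_prod_bounds[OF m N(2) pq]
  have "0 < birthday_prod (real m) N"
    using N by (intro birthday_prod_pos m) linarith
  moreover have "0 < mixed_birthday_prod p q (real m / 2) N"
    using mixed_birthday_prod_ge_exp[OF _ pq(1-3), of "real m / 2" N] m N
    by (auto intro: less_le_trans[OF exp_gt_zero])
  ultimately have ln_eq: "ln (probA \<epsilon> m N n w)
      = ln (birthday_prod (real m) N) + ln (mixed_birthday_prod p q (real m / 2) N)"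
    using m ev w by (simp add: probA_eq_birthday_prods p_def q_def ln_mult)
  have a: "(1 + \<epsilon>\<^sup>2 / 2) * (real N)\<^sup>2 / real m = (1 / 2 + (p\<^sup>2 + q\<^sup>2)) * ((real N)\<^sup>2 / real m)"
    unfolding s by (simp add: field_simps)
  have "0 \<le> real N / real m" "real N / real m \<le> 1 / 4" "0 \<le> (real N)\<^sup>2 / real m"
    using N m by (auto simp: field_simps)
  from abs_log_estimate_le[OF this(1,2,3) s_bounds \<kappa> X Y] show ?thesis
    unfolding ln_eq a by (simp only: add.assoc)
qed

lemma exists_relative_error:
  fixes x a d C :: real
  assumes a: "0 < a" and d: "0 \<le> d" and C: "0 \<le> C" and bound: "\<bar>x + a\<bar> \<le> d * a + C"
  shows "\<exists>r. \<bar>r\<bar> \<le> d \<and> \<bar>x + a * (1 + r)\<bar> \<le> C"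
proof -
  define E where "E = max (- C) (min C (x + a))"
  have "0 \<le> d * a"
    using d a by simp
  then have "\<bar>E - (x + a)\<bar> \<le> d * a"
    using bound C by (auto simp: E_def max_def min_def abs_le_iff)
  then have "\<bar>(E - (x + a)) / a\<bar> \<le> d"
    using a by (simp add: abs_divide divide_le_eq)
  moreover have "x + a * (1 + (E - (x + a)) / a) = E"
    using a by (simp add: field_simps)
  moreover have "\<bar>E\<bar> \<le> C"
    using C by (auto simp: E_def)
  ultimately show ?thesis
    by metis
qed

lemma ln_probA_relative_error:
  assumes "even m" and "w \<in> Kset m" and "0 < N" "4 * real N \<le> real m"
    and "0 < \<epsilon>" "\<epsilon> \<le> 1"
  shows "\<exists>r. \<bar>r\<bar> \<le> 10 * (real N / real m) \<and>
    \<bar>ln (probA \<epsilon> m N n w) + (1 + \<epsilon>\<^sup>2 / 2) * (real N)\<^sup>2 / real m * (1 + r)\<bar> \<le> 1"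
proof (rule exists_relative_error)
  show "0 < (1 + \<epsilon>\<^sup>2 / 2) * (real N)\<^sup>2 / real m"
    using assms by (simp add: add_pos_nonneg)
qed (use ln_probA_estimate[OF assms] in auto)

theorem lemma2:
  fixes N n :: "nat \<Rightarrow> nat" and \<epsilon> :: real
  assumes Npos: "\<forall>m. N m > 0" and npos: "\<forall>m. n m > 0"
    and No: "(\<lambda>k. real (N (2*k)) / real (2*k)) \<longlonglongrightarrow> 0"
    and no: "(\<lambda>k. real (n (2*k)) / real (2*k)) \<longlonglongrightarrow> 0"
    and eps: "0 < \<epsilon>" "\<epsilon> \<le> 1"
  shows "\<exists>\<delta> :: nat \<Rightarrow> real. \<delta> \<longlonglongrightarrow> 0 \<and> (\<exists>C::real. \<exists>M::nat. \<forall>m\<ge>M. even m \<longrightarrow>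
           (\<forall>w\<in>Kset m. \<exists>r. \<bar>r\<bar> \<le> \<delta> m \<and>
              \<bar>ln (probA \<epsilon> m (N m) (n m) w)
                 + (1 + \<epsilon>\<^sup>2 / 2) * (real (N m))\<^sup>2 / real m * (1 + r)\<bar> \<le> C))"
proof -
  text \<open>The sample \<open>Z\<close> carries total mass \<open>1\<close>.\<close>
  define g where "g k = real (N (2 * k)) / real (2 * k)" for k
  have g_half: "(\<lambda>m. g (m div 2)) \<longlonglongrightarrow> 0"
    using filterlim_compose[OF No[folded g_def] filterlim_at_top_div_const_nat[of 2]] by simp
  obtain M where M: "\<And>m. m \<ge> M \<Longrightarrow> g (m div 2) < 1 / 4"
    using order_tendstoD(2)[OF g_half, of "1 / 4"] by (auto simp: eventually_sequentially)
  have "\<exists>r. \<bar>r\<bar> \<le> 10 * g (m div 2) \<and>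
      \<bar>ln (probA \<epsilon> m (N m) (n m) w) + (1 + \<epsilon>\<^sup>2 / 2) * (real (N m))\<^sup>2 / real m * (1 + r)\<bar> \<le> 1"
    if "max M 1 \<le> m" "even m" "w \<in> Kset m" for m w
  proof -
    have g_m: "g (m div 2) = real (N m) / real m" and "real m > 0"
      using that by (auto simp: g_def)
    moreover have "real (N m) / real m < 1 / 4"
      using M[of m] that g_m by simp
    ultimately have "4 * real (N m) \<le> real m"
      by (simp add: field_simps)
    with g_m show ?thesis
      using ln_probA_relative_error[OF that(2,3) Npos[rule_format] _ eps] by simp
  qed
  moreover have "(\<lambda>m. 10 * g (m div 2)) \<longlonglongrightarrow> 0"
    using tendsto_mult_right_zero[OF g_half, of 10] by simp
  ultimately show ?thesis
    by (intro exI[of _ "\<lambda>m. 10 * g (m div 2)"] conjI exI[of _ "1 :: real"] exI[of _ "max M 1"]) auto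
qed

end
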